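(* Let $\phi=\langle X,Q,D,C\rangle$ be a QCSP with $C=\{c_1,\dots,c_m\}$, and for each $k\in\{1,\dots,m\}$ let $\phi_k=\langle X,Q,D,\{c_k\}\rangle$. Then for all $x_i\in X$, $V\subseteq X$ and $a,b\in D_{x_i}$: $\bigl(\bigvee_{k}\textsl{inconsistent}^{\phi_k}(x_i,a)\bigr)\rightarrow\textsl{inconsistent}^\phi(x_i,a)$; $\bigl(\bigvee_{k}\textsl{implied}^{\phi_k}(x_i,a)\bigr)\rightarrow\textsl{implied}^\phi(x_i,a)$; $\bigl(\bigwedge_{k}\textsl{d-fixable}^{\phi_k}(x_i,a)\bigr)\rightarrow\textsl{d-fixable}^\phi(x_i,a)$; $\bigl(\bigwedge_{k}\textsl{d-substitutable}^{\phi_k}(x_i,a,b)\bigr)\rightarrow\textsl{d-substitutable}^\phi(x_i,a,b)$; $\bigl(\bigwedge_{k}\textsl{d-interchangeable}^{\phi_k}(x_i,a,b)\bigr)\rightarrow\textsl{d-interchangeable}^\phi(x_i,a,b)$; $\bigl(\bigvee_{k}\textsl{determined}^{\phi_k}(x_i)\bigr)\rightarrow\textsl{determined}^\phi(x_i)$; $\bigl(\bigwedge_{k}\textsl{d-irrelevant}^{\phi_k}(x_i)\bigr)\rightarrow\textsl{d-irrelevant}^\phi(x_i)$; $\bigl(\bigvee_{k}\textsl{dependent}^{\phi_k}(V,x_i)\bigr)\rightarrow\textsl{dependent}^\phi(V,x_i)$.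
   Context: Fix a finite set $\mathbb{D}$. For a finite set $V$ of variables, a $V$-tuple is a map $t:V\to\mathbb{D}$, written $x\mapsto t_x$; a $V$-relation is a set of $V$-tuples. A QCSP is a tuple $\phi=\langle X,Q,D,C\rangle$ where $X=\{x_1,\dots,x_n\}$ is a finite set of variables linearly ordered by index, $Q$ assigns to each $x_i$ a quantifier $Q_{x_i}\in\{\forall,\exists\}$, $D$ assigns to each $x_i$ a domain $D_{x_i}\subseteq\mathbb{D}$, and $C$ is a finite set of constraints, each being a $V$-relation for some $V\subseteq X$. For $V\subseteq X$, $\prod_{x\in V}D_x$ denotes the set of $V$-tuples $t$ with $t_x\in D_x$ for all $x\in V$. For an $X$-tuple $t$, $x\in X$, $a\in\mathbb{D}$, $t[x:=a]$ is the tuple equal to $t$ except that its value at $x$ is $a$; $t|_U$ is the restriction to $U$. Let $E=\{x_i:Q_{x_i}=\exists\}$, $A=\{x_i:Q_{x_i}=\forall\}$, $A_j=\{x_i\in A:i\le j\}$. $\mathrm{sol}^\phi$ is the set of $t\in\prod_{x\in X}D_x$ with $t|_V\in c$ for every $V$-relation $c\in C$. A strategy is a family $s=(s_{x_i})_{x_i\in E}$ of functions $s_{x_i}:\prod_{y\in A_{i-1}}D_y\to D_{x_i}$; its scenarios $\mathrm{sce}^\phi(s)$ are the $t\in\prod_{x\in X}D_x$ with $t_{x_i}=s_{x_i}(t|_{A_{i-1}})$ for all $x_i\in E$; $s$ is winning if $\mathrm{sce}^\phi(s)\subseteq\mathrm{sol}^\phi$; $\mathrm{out}^\phi=\bigcup_{s\text{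 winning}}\mathrm{sce}^\phi(s)$. Deep properties, for a QCSP $\psi$ and $\mathrm{out}=\mathrm{out}^\psi$: $\textsl{inconsistent}^\psi(x_i,a)$ iff $\forall t\in\mathrm{out}.\ t_{x_i}\ne a$; $\textsl{implied}^\psi(x_i,a)$ iff $\forall t\in\mathrm{out}.\ t_{x_i}=a$; $\textsl{d-fixable}^\psi(x_i,a)$ iff $\forall t\in\mathrm{out}.\ t[x_i:=a]\in\mathrm{out}$; $\textsl{d-substitutable}^\psi(x_i,a,b)$ iff $\forall t\in\mathrm{out}.\ (t_{x_i}=a)\rightarrow t[x_i:=b]\in\mathrm{out}$; $\textsl{d-interchangeable}^\psi(x_i,a,b)$ iff $\textsl{d-substitutable}^\psi(x_i,a,b)\wedge\textsl{d-substitutable}^\psi(x_i,b,a)$; $\textsl{determined}^\psi(x_i)$ iff $\forall t\in\mathrm{out}.\ \forall b\in D_{x_i}\setminus\{t_{x_i}\}.\ t[x_i:=b]\notin\mathrm{out}$; $\textsl{d-irrelevant}^\psi(x_i)$ iff $\forall t\in\mathrm{out}.\ \forall b\in D_{x_i}.\ t[x_i:=b]\in\mathrm{out}$; $\textsl{dependent}^\psi(V,x_i)$ iff $\forall t,t'\in\mathrm{out}.\ (t|_V=t'|_V)\rightarrow t_{x_i}=t'_{x_i}$. *)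

theory Defs
  imports Main
begin

text \<open>Variables x_1,...,x_n are represented by their indices 1..n.
  A V-tuple is a partial map t :: nat \<rightharpoonup> 'd with dom t = V.
  A constraint is a pair (V, R) where R is a V-relation (a set of V-tuples).\<close>

datatype quant = Forall | Exists

record 'd qcsp =
  nvars :: nat
  quant :: "nat \<Rightarrow> quant"
  doms  :: "nat \<Rightarrow> 'd set"
  cons  :: "(nat set \<times> (nat \<rightharpoonup> 'd) set) set"

definition vars :: "'d qcsp \<Rightarrow> nat set" where
  "vars \<phi> = {1..nvars \<phi>}"

definition wf_qcsp :: "('d::finite) qcsp \<Rightarrow> bool" where
  "wf_qcsp \<phi> \<longleftrightarrow> finite (cons \<phi>) \<and>
     (\<forall>(V, R) \<in> cons \<phi>. V \<subseteq> vars \<phi> \<and> (\<forall>t\<in>R. dom t = V))"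

definition ptuples :: "(nat \<Rightarrow> 'd set) \<Rightarrow> nat set \<Rightarrow> (nat \<rightharpoonup> 'd) set" where
  "ptuples D V = {t. dom t = V \<and> (\<forall>x\<in>V. the (t x) \<in> D x)}"

definition Evars :: "'d qcsp \<Rightarrow> nat set" where
  "Evars \<phi> = {i \<in> vars \<phi>. quant \<phi> i = Exists}"

definition Avars :: "'d qcsp \<Rightarrow> nat set" where
  "Avars \<phi> = {i \<in> vars \<phi>. quant \<phi> i = Forall}"

definition Aupto :: "'d qcsp \<Rightarrow> nat \<Rightarrow> nat set" where
  "Aupto \<phi> j = {i \<in> Avars \<phi>. i \<le> j}"

definition sol :: "'d qcsp \<Rightarrow> (nat \<rightharpoonup> 'd) set" where
  "sol \<phi> = {t \<in> ptuples (doms \<phi>) (vars \<phi>). \<forall>(V, R) \<in> cons \<phi>. t |` V \<in> R}"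

text \<open>A strategy: for each existential x_i a function from the product of the domains of
  the universal variables preceding x_i into D_{x_i} (values outside that product are irrelevant).\<close>
definition is_strategy :: "'d qcsp \<Rightarrow> (nat \<Rightarrow> (nat \<rightharpoonup> 'd) \<Rightarrow> 'd) \<Rightarrow> bool" where
  "is_strategy \<phi> s \<longleftrightarrow>
     (\<forall>i\<in>Evars \<phi>. \<forall>u\<in>ptuples (doms \<phi>) (Aupto \<phi> (i - 1)). s i u \<in> doms \<phi> i)"

definition sce :: "'d qcsp \<Rightarrow> (nat \<Rightarrow> (nat \<rightharpoonup> 'd) \<Rightarrow> 'd) \<Rightarrow> (nat \<rightharpoonup> 'd) set" where
  "sce \<phi> s = {t \<in> ptuples (doms \<phi>) (vars \<phi>).
      \<forall>i\<in>Evars \<phi>. t i = Some (s i (t |` Aupto \<phi> (i - 1)))}"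

definition winning :: "'d qcsp \<Rightarrow> (nat \<Rightarrow> (nat \<rightharpoonup> 'd) \<Rightarrow> 'd) \<Rightarrow> bool" where
  "winning \<phi> s \<longleftrightarrow> is_strategy \<phi> s \<and> sce \<phi> s \<subseteq> sol \<phi>"

definition out :: "'d qcsp \<Rightarrow> (nat \<rightharpoonup> 'd) set" where
  "out \<phi> = \<Union> {sce \<phi> s | s. winning \<phi> s}"

definition inconsistent :: "'d qcsp \<Rightarrow> nat \<Rightarrow> 'd \<Rightarrow> bool" where
  "inconsistent \<phi> x a \<longleftrightarrow> (\<forall>t\<in>out \<phi>. t x \<noteq> Some a)"

definition implied :: "'d qcsp \<Rightarrow> nat \<Rightarrow> 'd \<Rightarrow> bool" where
  "implied \<phi> x a \<longleftrightarrow> (\<forall>t\<in>out \<phi>. t x = Some a)"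

definition d_fixable :: "'d qcsp \<Rightarrow> nat \<Rightarrow> 'd \<Rightarrow> bool" where
  "d_fixable \<phi> x a \<longleftrightarrow> (\<forall>t\<in>out \<phi>. t(x \<mapsto> a) \<in> out \<phi>)"

definition d_substitutable :: "'d qcsp \<Rightarrow> nat \<Rightarrow> 'd \<Rightarrow> 'd \<Rightarrow> bool" where
  "d_substitutable \<phi> x a b \<longleftrightarrow> (\<forall>t\<in>out \<phi>. t x = Some a \<longrightarrow> t(x \<mapsto> b) \<in> out \<phi>)"

definition d_interchangeable :: "'d qcsp \<Rightarrow> nat \<Rightarrow> 'd \<Rightarrow> 'd \<Rightarrow> bool" where
  "d_interchangeable \<phi> x a b \<longleftrightarrow> d_substitutable \<phi> x a b \<and> d_substitutable \<phi> x b a"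

definition determined :: "'d qcsp \<Rightarrow> nat \<Rightarrow> bool" where
  "determined \<phi> x \<longleftrightarrow>
     (\<forall>t\<in>out \<phi>. \<forall>b\<in>doms \<phi> x - {the (t x)}. t(x \<mapsto> b) \<notin> out \<phi>)"

definition d_irrelevant :: "'d qcsp \<Rightarrow> nat \<Rightarrow> bool" where
  "d_irrelevant \<phi> x \<longleftrightarrow> (\<forall>t\<in>out \<phi>. \<forall>b\<in>doms \<phi> x. t(x \<mapsto> b) \<in> out \<phi>)"

definition dependent :: "'d qcsp \<Rightarrow> nat set \<Rightarrow> nat \<Rightarrow> bool" where
  "dependent \<phi> V x \<longleftrightarrow> (\<forall>t\<in>out \<phi>. \<forall>t'\<in>out \<phi>. t |` V = t' |` V \<longrightarrow> t x = t' x)"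

definition single_con :: "'d qcsp \<Rightarrow> nat set \<times> (nat \<rightharpoonup> 'd) set \<Rightarrow> 'd qcsp" where
  "single_con \<phi> c = \<phi>\<lparr>cons := {c}\<rparr>"

end

theory Submission
  imports Defs
begin

text \<open>
  The properties inconsistent, implied, determined and dependent are universal statements
  about the outcome set, so they pass from any phi_k to phi because every winning strategy
  of phi is winning for each phi_k, i.e. out phi is contained in out phi_k.

  The properties d-fixable, d-substitutable, d-interchangeable and d-irrelevant all say that
  the outcome set is closed under re-assigning x_i to b whenever t_i lies in some set S.
  The heart of the proof is that such closure for every phi_k implies it for phi.  Given a
  winning strategy s of phi and a scenario t with t_i in S, we build a strategy s' that has
  t[x_i:=b] as a scenario and whose scenarios are all either scenarios of s or re-assignments
  v[x_i:=b] of scenarios v of s with v_i in S.  If x_i is existential, s' plays b wherever s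
  would play a value in S; if x_i is universal, s' answers the move b exactly as s answers
  the move t_i.  By the closure for each phi_k, every such v[x_i:=b] satisfies every single
  constraint, hence lies in sol phi, so s' is winning for phi.
\<close>

lemma single_con_simps [simp]:
  "vars (single_con \<phi> c) = vars \<phi>" "Evars (single_con \<phi> c) = Evars \<phi>"
  "Avars (single_con \<phi> c) = Avars \<phi>" "Aupto (single_con \<phi> c) j = Aupto \<phi> j"
  "doms (single_con \<phi> c) = doms \<phi>"
  "sce (single_con \<phi> c) s = sce \<phi> s"
  "is_strategy (single_con \<phi> c) s = is_strategy \<phi> s"
  by (simp_all add: single_con_def vars_def Evars_def Avars_def Aupto_def sce_def
      is_strategy_def)

lemma sol_single_con_iff:
  "t \<in> sol \<phi> \<longleftrightarrow> t \<in> ptuples (doms \<phi>) (vars \<phi>) \<and> (\<forall>c\<in>cons \<phi>. t \<in> sol (single_con \<phi> c))"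
  by (fastforce simp: sol_def single_con_def vars_def)

lemma out_subset_sol: "out \<phi> \<subseteq> sol \<phi>"
  by (auto simp: out_def winning_def)

lemma out_dom: "t \<in> out \<phi> \<Longrightarrow> dom t = vars \<phi>"
  by (auto simp: out_def sce_def ptuples_def)

text \<open>Every winning strategy of phi wins each phi_k, so outcomes of phi are outcomes of phi_k.\<close>

lemma out_subset_single_con: "c \<in> cons \<phi> \<Longrightarrow> out \<phi> \<subseteq> out (single_con \<phi> c)"
  using sol_single_con_iff[of _ \<phi>] by (auto simp: out_def winning_def)

lemma ptuples_update: "v \<in> ptuples D V \<Longrightarrow> i \<in> V \<Longrightarrow> b \<in> D i \<Longrightarrow> v(i\<mapsto>b) \<in> ptuples D V"
  by (auto simp: ptuples_def)

lemma ptuples_restrict: "v \<in> ptuples D V \<Longrightarrow> W \<subseteq> V \<Longrightarrow> v |` W \<in> ptuples D W"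
  by (auto simp: ptuples_def)

lemma Aupto_subset_vars: "Aupto \<phi> j \<subseteq> vars \<phi>"
  by (auto simp: Aupto_def Avars_def)

lemma restrict_Aupto_update_existential:
  "i \<in> Evars \<phi> \<Longrightarrow> (v(i\<mapsto>w)) |` Aupto \<phi> j = v |` Aupto \<phi> j"
  by (auto simp: Aupto_def Avars_def Evars_def restrict_map_def fun_eq_iff)

definition update_closed :: "'d qcsp \<Rightarrow> nat \<Rightarrow> 'd set \<Rightarrow> 'd \<Rightarrow> bool" where
  "update_closed \<phi> i S b \<longleftrightarrow> (\<forall>t\<in>out \<phi>. the (t i) \<in> S \<longrightarrow> t(i\<mapsto>b) \<in> out \<phi>)"

definition redirected :: "'d qcsp \<Rightarrow> (nat \<Rightarrow> (nat \<rightharpoonup> 'd) \<Rightarrow> 'd) \<Rightarrow> nat \<Rightarrow> 'd set \<Rightarrow> 'd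
    \<Rightarrow> (nat \<rightharpoonup> 'd) set" where
  "redirected \<phi> s i S b = sce \<phi> s \<union> (\<lambda>v. v(i\<mapsto>b)) ` {v \<in> sce \<phi> s. the (v i) \<in> S}"

lemma redirect_existential:
  assumes iE: "i \<in> Evars \<phi>" and b: "b \<in> doms \<phi> i" and s: "is_strategy \<phi> s"
    and t: "t \<in> sce \<phi> s" and tS: "the (t i) \<in> S"
  obtains s' where "is_strategy \<phi> s'" "t(i\<mapsto>b) \<in> sce \<phi> s'"
    "sce \<phi> s' \<subseteq> redirected \<phi> s i S b"
proof
  define s' where "s' = (\<lambda>j u. if j = i \<and> s i u \<in> S then b else s j u)"
  have i: "i \<in> vars \<phi>" using iE by (simp add: Evars_def)
  note restr = restrict_Aupto_update_existential[OF iE]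
  show "is_strategy \<phi> s'" using s b by (auto simp: is_strategy_def s'_def)
  show "t(i\<mapsto>b) \<in> sce \<phi> s'"
    using t tS i b by (auto simp: sce_def s'_def restr simp del: restrict_fun_upd
        intro: ptuples_update)
  show "sce \<phi> s' \<subseteq> redirected \<phi> s i S b"
  proof
    fix v' assume v': "v' \<in> sce \<phi> s'"
    define w where "w = s i (v' |` Aupto \<phi> (i - 1))"
    define v where "v = v'(i \<mapsto> w)"
    have v'p: "v' \<in> ptuples (doms \<phi>) (vars \<phi>)" using v' by (simp add: sce_def)
    have "w \<in> doms \<phi> i"
      using s iE ptuples_restrict[OF v'p Aupto_subset_vars] by (auto simp: is_strategy_def w_def)
    with v'p i have "v \<in> ptuples (doms \<phi>) (vars \<phi>)" unfolding v_def by (intro ptuples_update)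
    moreover have "v j = Some (s j (v |` Aupto \<phi> (j - 1)))" if j: "j \<in> Evars \<phi>" for j
      using v' j by (auto simp: sce_def v_def w_def s'_def restr simp del: restrict_fun_upd)
    ultimately have v: "v \<in> sce \<phi> s" by (simp add: sce_def)
    have v'i: "v' i = Some (if w \<in> S then b else w)"
      using v' iE by (auto simp: sce_def s'_def w_def)
    show "v' \<in> redirected \<phi> s i S b"
    proof (cases "w \<in> S")
      case True
      have "v' = v(i\<mapsto>b)" using True v'i by (auto simp: v_def fun_eq_iff)
      moreover have "the (v i) \<in> S" using True by (simp add: v_def)
      ultimately have "v' \<in> (\<lambda>v. v(i\<mapsto>b)) ` {v \<in> sce \<phi> s. the (v i) \<in> S}" using v by blast
      then show ?thesis by (simp add: redirected_def)
    next
      case False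
      then have "v' = v" using v'i by (auto simp: v_def fun_eq_iff)
      then show ?thesis using v by (simp add: redirected_def)
    qed
  qed
qed

text \<open>If x_i is universal with t_i = c, let the strategy answer the move b as it answers c.\<close>

lemma redirect_universal:
  assumes iA: "i \<in> Avars \<phi>" and b: "b \<in> doms \<phi> i" and s: "is_strategy \<phi> s"
    and t: "t \<in> sce \<phi> s" and tS: "the (t i) \<in> S"
  obtains s' where "is_strategy \<phi> s'" "t(i\<mapsto>b) \<in> sce \<phi> s'"
    "sce \<phi> s' \<subseteq> redirected \<phi> s i S b"
proof
  have i: "i \<in> vars \<phi>" and iE: "i \<notin> Evars \<phi>" using iA by (auto simp: Avars_def Evars_def)
  have tp: "t \<in> ptuples (doms \<phi>) (vars \<phi>)" using t by (simp add: sce_def)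
  define c where "c = the (t i)"
  have "i \<in> dom t" using tp i by (simp add: ptuples_def)
  then have tc: "t i = Some c" by (auto simp: c_def)
  have c: "c \<in> doms \<phi> i" using tp i by (simp add: ptuples_def c_def)
  define swap :: "(nat \<rightharpoonup> 'a) \<Rightarrow> (nat \<rightharpoonup> 'a)"
    where "swap u = (if u i = Some b then u(i\<mapsto>c) else u)" for u
  define s' where "s' = (\<lambda>j u. s j (swap u))"
  have swap_restrict: "swap u |` W = swap (u |` W)" for u W
    by (auto simp: swap_def restrict_map_def fun_eq_iff)
  have swap_ptuples: "swap u \<in> ptuples (doms \<phi>) W" if "u \<in> ptuples (doms \<phi>) W" for u W
    using that c by (auto simp: swap_def ptuples_def)
  have swap_other: "swap u j = u j" if "j \<noteq> i" for u j
    using that by (simp add: swap_def)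
  show "is_strategy \<phi> s'" using s by (auto simp: is_strategy_def s'_def swap_ptuples)
  have "swap (t(i\<mapsto>b)) = t" using tc by (auto simp: swap_def fun_eq_iff)
  then show "t(i\<mapsto>b) \<in> sce \<phi> s'"
    using t tp i b iE by (auto simp: sce_def s'_def swap_restrict[symmetric] intro: ptuples_update)
  show "sce \<phi> s' \<subseteq> redirected \<phi> s i S b"
  proof
    fix v' assume v': "v' \<in> sce \<phi> s'"
    have "swap v' \<in> ptuples (doms \<phi>) (vars \<phi>)" using v' by (simp add: sce_def swap_ptuples)
    moreover have "swap v' j = Some (s j (swap v' |` Aupto \<phi> (j - 1)))" if "j \<in> Evars \<phi>" for j
    proof -
      have "j \<noteq> i" using that iE by auto
      then show ?thesis using v' that by (simp add: sce_def s'_def swap_restrict swap_other)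
    qed
    ultimately have v: "swap v' \<in> sce \<phi> s" by (simp add: sce_def)
    show "v' \<in> redirected \<phi> s i S b"
    proof (cases "v' i = Some b")
      case True
      have "v' = (swap v')(i\<mapsto>b)" using True by (auto simp: swap_def fun_eq_iff)
      moreover have "the (swap v' i) \<in> S" using True tS by (simp add: swap_def c_def)
      ultimately have "v' \<in> (\<lambda>v. v(i\<mapsto>b)) ` {v \<in> sce \<phi> s. the (v i) \<in> S}" using v by blast
      then show ?thesis by (simp add: redirected_def)
    next
      case False
      then show ?thesis using v by (simp add: redirected_def swap_def)
    qed
  qed
qed

lemma redirected_subset_sol:
  assumes i: "i \<in> vars \<phi>" and b: "b \<in> doms \<phi> i"
    and closed: "\<forall>c\<in>cons \<phi>. update_closed (single_con \<phi> c) i S b"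
    and s: "winning \<phi> s"
  shows "redirected \<phi> s i S b \<subseteq> sol \<phi>"
proof -
  have "v(i\<mapsto>b) \<in> sol \<phi>" if v: "v \<in> sce \<phi> s" and vS: "the (v i) \<in> S" for v
  proof -
    have "v \<in> out \<phi>" using v s by (auto simp: out_def)
    then have "v(i\<mapsto>b) \<in> sol (single_con \<phi> c)" if c: "c \<in> cons \<phi>" for c
    proof -
      have "v \<in> out (single_con \<phi> c)" using \<open>v \<in> out \<phi>\<close> out_subset_single_con[OF c] by blast
      then have "v(i\<mapsto>b) \<in> out (single_con \<phi> c)"
        using closed c vS unfolding update_closed_def by blast
      then show ?thesis using out_subset_sol by blast
    qed
    moreover have "v(i\<mapsto>b) \<in> ptuples (doms \<phi>) (vars \<phi>)"
      using v i b by (auto simp: sce_def intro: ptuples_update)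
    ultimately show ?thesis by (blast intro: sol_single_con_iff[THEN iffD2])
  qed
  then show ?thesis using s by (auto simp: redirected_def winning_def)
qed

lemma update_closed_single_con:
  assumes i: "i \<in> vars \<phi>" and b: "b \<in> doms \<phi> i"
    and closed: "\<forall>c\<in>cons \<phi>. update_closed (single_con \<phi> c) i S b"
  shows "update_closed \<phi> i S b"
  unfolding update_closed_def
proof (intro ballI impI)
  fix t assume "t \<in> out \<phi>" and tS: "the (t i) \<in> S"
  then obtain s where s: "winning \<phi> s" and t: "t \<in> sce \<phi> s" by (auto simp: out_def)
  have strategy: "is_strategy \<phi> s" using s by (simp add: winning_def)
  obtain s' where s': "is_strategy \<phi> s'" "t(i\<mapsto>b) \<in> sce \<phi> s'"
    "sce \<phi> s' \<subseteq> redirected \<phi> s i S b"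
  proof (cases "quant \<phi> i")
    case Exists
    then have "i \<in> Evars \<phi>" using i by (simp add: Evars_def)
    from redirect_existential[OF this b strategy t tS] that show ?thesis by blast
  next
    case Forall
    then have "i \<in> Avars \<phi>" using i by (simp add: Avars_def)
    from redirect_universal[OF this b strategy t tS] that show ?thesis by blast
  qed
  have "winning \<phi> s'"
    using s' redirected_subset_sol[OF i b closed s] unfolding winning_def by blast
  then show "t(i\<mapsto>b) \<in> out \<phi>" using s'(2) unfolding out_def by blast
qed

lemma inconsistent_single_con:
  "c \<in> cons \<phi> \<Longrightarrow> inconsistent (single_con \<phi> c) i a \<Longrightarrow> inconsistent \<phi> i a"
  using out_subset_single_con[of c \<phi>] unfolding inconsistent_def by blast

lemma implied_single_con:
  "c \<in> cons \<phi> \<Longrightarrow> implied (single_con \<phi> c) i a \<Longrightarrow> implied \<phi> i a"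
  using out_subset_single_con[of c \<phi>] unfolding implied_def by blast

lemma determined_single_con:
  "c \<in> cons \<phi> \<Longrightarrow> determined (single_con \<phi> c) i \<Longrightarrow> determined \<phi> i"
  using out_subset_single_con[of c \<phi>] unfolding determined_def single_con_simps by blast

lemma dependent_single_con:
  "c \<in> cons \<phi> \<Longrightarrow> dependent (single_con \<phi> c) V i \<Longrightarrow> dependent \<phi> V i"
  using out_subset_single_con[of c \<phi>] unfolding dependent_def by blast

lemma d_fixable_iff_update_closed: "d_fixable \<phi> i a \<longleftrightarrow> update_closed \<phi> i UNIV a"
  by (simp add: d_fixable_def update_closed_def)

lemma d_substitutable_iff_update_closed:
  assumes "i \<in> vars \<phi>"
  shows "d_substitutable \<phi> i a b \<longleftrightarrow> update_closed \<phi> i {a} b"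
proof -
  have "t i = Some a \<longleftrightarrow> the (t i) \<in> {a}" if "t \<in> out \<phi>" for t
  proof -
    have "i \<in> dom t" using out_dom[OF that] assms by simp
    then show ?thesis by auto
  qed
  then show ?thesis by (auto simp: d_substitutable_def update_closed_def)
qed

lemma d_irrelevant_iff_fixable: "d_irrelevant \<phi> i \<longleftrightarrow> (\<forall>b\<in>doms \<phi> i. d_fixable \<phi> i b)"
  by (auto simp: d_irrelevant_def d_fixable_def)

lemma d_fixable_single_con:
  "i \<in> vars \<phi> \<Longrightarrow> a \<in> doms \<phi> i \<Longrightarrow> \<forall>c\<in>cons \<phi>. d_fixable (single_con \<phi> c) i a
    \<Longrightarrow> d_fixable \<phi> i a"
  by (simp add: d_fixable_iff_update_closed update_closed_single_con)

lemma d_substitutable_single_con: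
  "i \<in> vars \<phi> \<Longrightarrow> b \<in> doms \<phi> i \<Longrightarrow> \<forall>c\<in>cons \<phi>. d_substitutable (single_con \<phi> c) i a b
    \<Longrightarrow> d_substitutable \<phi> i a b"
  by (simp add: d_substitutable_iff_update_closed update_closed_single_con)

lemma d_interchangeable_single_con:
  "i \<in> vars \<phi> \<Longrightarrow> a \<in> doms \<phi> i \<Longrightarrow> b \<in> doms \<phi> i
    \<Longrightarrow> \<forall>c\<in>cons \<phi>. d_interchangeable (single_con \<phi> c) i a b \<Longrightarrow> d_interchangeable \<phi> i a b"
  by (simp add: d_interchangeable_def d_substitutable_single_con)

lemma d_irrelevant_single_con:
  "i \<in> vars \<phi> \<Longrightarrow> \<forall>c\<in>cons \<phi>. d_irrelevant (single_con \<phi> c) i \<Longrightarrow> d_irrelevant \<phi> i"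
  by (simp add: d_irrelevant_iff_fixable d_fixable_single_con)

theorem proposition14:
  fixes \<phi> :: "('d::finite) qcsp" and i :: nat and V :: "nat set" and a b :: 'd
  assumes "wf_qcsp \<phi>"
    and "i \<in> vars \<phi>" and "V \<subseteq> vars \<phi>"
    and "a \<in> doms \<phi> i" and "b \<in> doms \<phi> i"
  shows "((\<exists>c\<in>cons \<phi>. inconsistent (single_con \<phi> c) i a) \<longrightarrow> inconsistent \<phi> i a)
     \<and> ((\<exists>c\<in>cons \<phi>. implied (single_con \<phi> c) i a) \<longrightarrow> implied \<phi> i a)
     \<and> ((\<forall>c\<in>cons \<phi>. d_fixable (single_con \<phi> c) i a) \<longrightarrow> d_fixable \<phi> i a)
     \<and> ((\<forall>c\<in>cons \<phi>. d_substitutable (single_con \<phi> c) i a b) \<longrightarrow> d_substitutable \<phi> i a b)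
     \<and> ((\<forall>c\<in>cons \<phi>. d_interchangeable (single_con \<phi> c) i a b) \<longrightarrow> d_interchangeable \<phi> i a b)
     \<and> ((\<exists>c\<in>cons \<phi>. determined (single_con \<phi> c) i) \<longrightarrow> determined \<phi> i)
     \<and> ((\<forall>c\<in>cons \<phi>. d_irrelevant (single_con \<phi> c) i) \<longrightarrow> d_irrelevant \<phi> i)
     \<and> ((\<exists>c\<in>cons \<phi>. dependent (single_con \<phi> c) V i) \<longrightarrow> dependent \<phi> V i)"
proof (intro conjI impI)
  show "inconsistent \<phi> i a" if "\<exists>c\<in>cons \<phi>. inconsistent (single_con \<phi> c) i a"
    using that by (elim bexE) (rule inconsistent_single_con)
  show "implied \<phi> i a" if "\<exists>c\<in>cons \<phi>. implied (single_con \<phi> c) i a"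
    using that by (elim bexE) (rule implied_single_con)
  show "d_fixable \<phi> i a" if "\<forall>c\<in>cons \<phi>. d_fixable (single_con \<phi> c) i a"
    using d_fixable_single_con[OF assms(2,4) that] .
  show "d_substitutable \<phi> i a b" if "\<forall>c\<in>cons \<phi>. d_substitutable (single_con \<phi> c) i a b"
    using d_substitutable_single_con[OF assms(2,5) that] .
  show "d_interchangeable \<phi> i a b"
    if "\<forall>c\<in>cons \<phi>. d_interchangeable (single_con \<phi> c) i a b"
    using d_interchangeable_single_con[OF assms(2,4,5) that] .
  show "determined \<phi> i" if "\<exists>c\<in>cons \<phi>. determined (single_con \<phi> c) i"
    using that by (elim bexE) (rule determined_single_con)
  show "d_irrelevant \<phi> i" if "\<forall>c\<in>cons \<phi>. d_irrelevant (single_con \<phi> c) i"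
    using d_irrelevant_single_con[OF assms(2) that] .
  show "dependent \<phi> V i" if "\<exists>c\<in>cons \<phi>. dependent (single_con \<phi> c) V i"
    using that by (elim bexE) (rule dependent_single_con)
qed

end
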